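(* Let $\mathbb X,\mathbb Y$ be Euclidean spaces, $g\colon\mathbb X\to\mathbb Y$ twice continuously differentiable, $D\subset\mathbb Y$ closed, $\Phi(x):=g(x)-D$, $(\bar x,0)\in\operatorname{gph}\Phi$, $u\in\mathbb S_{\mathbb X}$. Assume FOSCMS$(u)$: for all $y^*$, [$\nabla g(\bar x)^*y^*=0$, $y^*\in\mathcal N_D(g(\bar x);\nabla g(\bar x)u)$] implies $y^*=0$. Then all of the following hold: (Q1) for all $y^*,z^*$: [$\nabla g(\bar x)^*y^*=0$, $\nabla^2\langle y^*,g\rangle(\bar x)(u)+\nabla g(\bar x)^*z^*=0$, $y^*\in\mathcal N_D(g(\bar x);\nabla g(\bar x)u)$, $z^*\in D\mathcal N_D(g(\bar x),y^* )(\nabla g(\bar x)u)$] implies $y^*=0$; either (Q2): for all $y^*,\hat z^*$: [$\nabla g(\bar x)^*y^*=0$, $\nabla g(\bar x)^*\hat z^*=0$, $y^*\in\mathcal N_D(g(\bar x);\nabla g(\bar x)u)$, $\hat z^*\in D\mathcal N_D(g(\bar x),y^* )(0)$] implies $\hat z^*=0$, or (Q3): $\nabla g(\bar x)u\ne0$ and for all $y^*,\hat z^*$: [$\nabla g(\bar x)^*y^*=0$, $\nabla g(\bar x)^*\hat z^*=0$, $y^*\in\mathcal N_D(g(\bar x);\nabla g(\bar x)u)$] implies $\hat z^*\notin D_{\mathrm{sub}}\mathcal N_D(g(\bar x),y^* )(\nabla g(\bar x)u/\|\nabla g(\bar x)u\|)$; and for each $x^*\in\mathbb X$ and $y^*,z^*\in\mathbb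 Y$ with $x^*=\nabla^2\langle y^*,g\rangle(\bar x)(u)+\nabla g(\bar x)^*z^*$, $y^*\in\mathcal N_D(g(\bar x);\nabla g(\bar x)u)\cap\ker\nabla g(\bar x)^*$, $z^*\in D\mathcal N_D(g(\bar x),y^* )(\nabla g(\bar x)u)$, there is $\lambda\in\mathcal N_D(g(\bar x))$ with $x^*=\nabla g(\bar x)^*\lambda$.
   Context: $\nabla^2\langle y^*,g\rangle(\bar x)(u)$ is the Hessian of $x\mapsto\langle y^*,g(x)\rangle$ applied to $u$. $\mathcal N_D$ is the limiting normal cone; $\mathcal N_D(y;w)$ the directional limiting normal cone (all $\eta$ with $w_k\to w$, $t_k\downarrow0$, $\eta_k\to\eta$, $\eta_k\in\widehat{\mathcal N}_D(y+t_kw_k)$, $\widehat{\mathcal N}$ regular normal cone). $D\mathcal N_D(\bar y,\bar y^* )$ is the graphical derivative of the normal cone mapping (graph $=\mathcal T_{\operatorname{gph}\mathcal N_D}(\bar y,\bar y^* )$); $D_{\mathrm{sub}}\mathcal N_D(\bar y,\bar y^* )(w)$, $w\in\mathbb S_{\mathbb Y}$, is the set of $q\in\mathbb S_{\mathbb Y}$ with $w_k\to w$, $q_k\to q$, $t_k,\tau_k\downarrow0$, $\tau_k/t_k\to\infty$ and $\bar y^*+\tau_kq_k\in\mathcal N_D(\bar y+t_kw_k)$. *)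

theory Defs
  imports "HOL-Analysis.Analysis"
begin

definition regular_normal_cone :: "'a::euclidean_space set \<Rightarrow> 'a \<Rightarrow> 'a set" where
  "regular_normal_cone D y = {\<eta>. y \<in> D \<and>
     (\<forall>\<epsilon>>0. \<exists>\<delta>>0. \<forall>y'\<in>D. norm (y' - y) < \<delta> \<longrightarrow> \<eta> \<bullet> (y' - y) \<le> \<epsilon> * norm (y' - y))}"

definition limiting_normal_cone :: "'a::euclidean_space set \<Rightarrow> 'a \<Rightarrow> 'a set" where
  "limiting_normal_cone D y = {\<eta>. \<exists>yk \<eta>k. yk \<longlonglongrightarrow> y \<and> \<eta>k \<longlonglongrightarrow> \<eta> \<and>
     (\<forall>k. yk k \<in> D \<and> \<eta>k k \<in> regular_normal_cone D (yk k))}"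

definition dir_normal_cone :: "'a::euclidean_space set \<Rightarrow> 'a \<Rightarrow> 'a \<Rightarrow> 'a set" where
  "dir_normal_cone D y w = {\<eta>. \<exists>wk tk \<eta>k. wk \<longlonglongrightarrow> w \<and> tk \<longlonglongrightarrow> 0 \<and> (\<forall>k. tk k > 0) \<and>
     \<eta>k \<longlonglongrightarrow> \<eta> \<and> (\<forall>k. \<eta>k k \<in> regular_normal_cone D (y + tk k *\<^sub>R wk k))}"

text \<open>Graphical derivative of the normal cone mapping: graph equals the
  tangent (contingent) cone of gph N_D at (ybar, ystar).\<close>
definition graph_deriv_normal_cone :: "'a::euclidean_space set \<Rightarrow> 'a \<Rightarrow> 'a \<Rightarrow> 'a \<Rightarrow> 'a set" where
  "graph_deriv_normal_cone D ybar ystar w = {z. \<exists>tk wk zk. tk \<longlonglongrightarrow> 0 \<and> (\<forall>k. tk k > 0) \<and>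
     wk \<longlonglongrightarrow> w \<and> zk \<longlonglongrightarrow> z \<and>
     (\<forall>k. ystar + tk k *\<^sub>R zk k \<in> limiting_normal_cone D (ybar + tk k *\<^sub>R wk k))}"

definition sub_deriv_normal_cone :: "'a::euclidean_space set \<Rightarrow> 'a \<Rightarrow> 'a \<Rightarrow> 'a \<Rightarrow> 'a set" where
  "sub_deriv_normal_cone D ybar ystar w = {q. norm q = 1 \<and> (\<exists>wk qk tk \<tau>k.
     wk \<longlonglongrightarrow> w \<and> qk \<longlonglongrightarrow> q \<and> tk \<longlonglongrightarrow> 0 \<and> \<tau>k \<longlonglongrightarrow> 0 \<and>
     (\<forall>k. tk k > 0 \<and> \<tau>k k > 0) \<and> filterlim (\<lambda>k. \<tau>k k / tk k) at_top sequentially \<and>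
     (\<forall>k. ystar + \<tau>k k *\<^sub>R qk k \<in> limiting_normal_cone D (ybar + tk k *\<^sub>R wk k)))}"

text \<open>Hessian of x \<mapsto> <ystar, g x> at a point applied to u, given the second
  derivative G2x (a bilinear map) of g at that point: the vector h with
  h \<bullet> v = ystar \<bullet> G2x u v for all v.\<close>
definition hess_apply :: "('a::euclidean_space \<Rightarrow>\<^sub>L 'a \<Rightarrow>\<^sub>L 'b::euclidean_space) \<Rightarrow> 'b \<Rightarrow> 'a \<Rightarrow> 'a" where
  "hess_apply G2x ystar u = (\<Sum>b\<in>Basis. (ystar \<bullet> blinfun_apply (blinfun_apply G2x u) b) *\<^sub>R b)"

end

theory Submission
  imports Defs
begin

text \<open>FOSCMS applied to \<open>y\<^sup>*\<close> itself forces \<open>y\<^sup>* = 0\<close> in all three statements,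
  so the Hessian terms drop out. Because the limiting normal cone is a cone, with
  \<open>y\<^sup>* = 0\<close> both the graphical derivative \<open>D\<N>\<^sub>D(y, 0)(w)\<close> and the sub-derivative
  \<open>D\<^sub>s\<^sub>u\<^sub>b\<N>\<^sub>D(y, 0)(w/\<parallel>w\<parallel>)\<close> lie in the directional normal cone \<open>\<N>\<^sub>D(y; w)\<close>, where
  \<open>y = g(x)\<close> and \<open>w = \<nabla>g(x)u\<close>; so FOSCMS applies once more, now to \<open>z\<^sup>*\<close>.\<close>

lemma LIMSEQ_of_close:
  fixes a b :: "nat \<Rightarrow> 'a::real_normed_vector"
  assumes "\<And>k. norm (a k - b k) \<le> inverse (real (Suc k))" and "b \<longlonglongrightarrow> l"
  shows "a \<longlonglongrightarrow> l"
  by (rule Lim_transform[OF assms(2)], rule Lim_null_comparison[OF always_eventually])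
    (use assms(1) LIMSEQ_inverse_real_of_nat in auto)

lemma regular_normal_cone_scaleR:
  assumes e: "e \<in> regular_normal_cone D y" and c: "c \<ge> 0"
  shows "c *\<^sub>R e \<in> regular_normal_cone D y"
  unfolding regular_normal_cone_def
proof (safe)
  show "y \<in> D" using e unfolding regular_normal_cone_def by blast
next
  fix \<epsilon> :: real assume "\<epsilon> > 0"
  then have "\<epsilon> / (c + 1) > 0" using c by simp
  then obtain \<delta> where "\<delta> > 0" and \<delta>: "\<And>y'. y' \<in> D \<Longrightarrow> norm (y' - y) < \<delta> \<Longrightarrow>
      e \<bullet> (y' - y) \<le> \<epsilon> / (c + 1) * norm (y' - y)"
    using e unfolding regular_normal_cone_def by blast
  have "c * (\<epsilon> / (c + 1)) \<le> \<epsilon>"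
    using c \<open>\<epsilon> > 0\<close> by (simp add: field_simps)
  have "c *\<^sub>R e \<bullet> (y' - y) \<le> \<epsilon> * norm (y' - y)"
    if "y' \<in> D" "norm (y' - y) < \<delta>" for y'
  proof -
    have "c *\<^sub>R e \<bullet> (y' - y) \<le> c * (\<epsilon> / (c + 1)) * norm (y' - y)"
      using mult_left_mono[OF \<delta>[OF that] c] by simp
    also have "\<dots> \<le> \<epsilon> * norm (y' - y)"
      by (rule mult_right_mono) (fact, simp)
    finally show ?thesis .
  qed
  then show "\<exists>\<delta>>0. \<forall>y'\<in>D. norm (y' - y) < \<delta> \<longrightarrow> c *\<^sub>R e \<bullet> (y' - y) \<le> \<epsilon> * norm (y' - y)"
    using \<open>\<delta> > 0\<close> by blast
qed

lemma limiting_normal_cone_scaleR: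
  assumes "e \<in> limiting_normal_cone D y" and "c \<ge> 0"
  shows "c *\<^sub>R e \<in> limiting_normal_cone D y"
proof -
  obtain yk ek where "yk \<longlonglongrightarrow> y" "ek \<longlonglongrightarrow> e"
      and reg: "\<forall>k. yk k \<in> D \<and> ek k \<in> regular_normal_cone D (yk k)"
    using assms(1) unfolding limiting_normal_cone_def by blast
  moreover have "(\<lambda>k. c *\<^sub>R ek k) \<longlonglongrightarrow> c *\<^sub>R e"
    using \<open>ek \<longlonglongrightarrow> e\<close> by (rule tendsto_scaleR[OF tendsto_const])
  moreover have "\<forall>k. yk k \<in> D \<and> c *\<^sub>R ek k \<in> regular_normal_cone D (yk k)"
    using reg regular_normal_cone_scaleR assms(2) by blast
  ultimately show ?thesis
    unfolding limiting_normal_cone_def by blast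
qed

lemma limiting_normal_cone_approx:
  assumes "e \<in> limiting_normal_cone D y" and "\<delta> > 0" and "\<epsilon> > 0"
  obtains y' e' where "e' \<in> regular_normal_cone D y'" "norm (y' - y) < \<delta>" "norm (e' - e) < \<epsilon>"
proof -
  obtain yk ek where "yk \<longlonglongrightarrow> y" "ek \<longlonglongrightarrow> e" and reg: "\<And>k. ek k \<in> regular_normal_cone D (yk k)"
    using assms(1) unfolding limiting_normal_cone_def by blast
  have "eventually (\<lambda>k. dist (yk k) y < \<delta>) sequentially"
    and "eventually (\<lambda>k. dist (ek k) e < \<epsilon>) sequentially"
    using tendstoD[OF \<open>yk \<longlonglongrightarrow> y\<close> assms(2)] tendstoD[OF \<open>ek \<longlonglongrightarrow> e\<close> assms(3)] .
  then obtain k where "dist (yk k) y < \<delta>" "dist (ek k) e < \<epsilon>"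
    using eventually_conj eventually_happens' sequentially_bot by blast
  then show ?thesis using that[OF reg[of k]] by (simp add: dist_norm)
qed

text \<open>Limits of limiting normals at the points \<open>y + t\<^sub>k w\<^sub>k\<close> are directional normals:
  each limiting normal is replaced by a nearby regular normal at a point within
  \<open>t\<^sub>k/(k+1)\<close>, and the direction is read off that point.\<close>
lemma dir_normal_coneI:
  assumes t: "\<And>k. tk k > 0" "tk \<longlonglongrightarrow> 0" and w: "wk \<longlonglongrightarrow> w" and e: "ek \<longlonglongrightarrow> e"
    and lim: "\<And>k. ek k \<in> limiting_normal_cone D (y + tk k *\<^sub>R wk k)"
  shows "e \<in> dir_normal_cone D y w"
proof -
  have "\<exists>y' e'. e' \<in> regular_normal_cone D y' \<and>
      norm (y' - (y + tk k *\<^sub>R wk k)) < tk k * inverse (real (Suc k)) \<and>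
      norm (e' - ek k) < inverse (real (Suc k))" for k
    by (rule limiting_normal_cone_approx[OF lim[of k],
          where \<delta> = "tk k * inverse (real (Suc k))" and \<epsilon> = "inverse (real (Suc k))"])
      (use t(1)[of k] in simp, simp, blast)
  then obtain Y E where reg: "\<And>k. E k \<in> regular_normal_cone D (Y k)"
      and Y: "\<And>k. norm (Y k - (y + tk k *\<^sub>R wk k)) < tk k * inverse (real (Suc k))"
      and E: "\<And>k. norm (E k - ek k) < inverse (real (Suc k))"
    by metis
  define W where "W k = inverse (tk k) *\<^sub>R (Y k - y)" for k
  have Y_eq: "Y k = y + tk k *\<^sub>R W k" for k
    using t(1)[of k] by (simp add: W_def)
  have "norm (W k - wk k) \<le> inverse (real (Suc k))" for k
  proof -
    have "norm (W k - wk k) = inverse (tk k) * norm (Y k - (y + tk k *\<^sub>R wk k))"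
      using t(1)[of k] by (simp add: Y_eq flip: scaleR_diff_right)
    also have "\<dots> \<le> inverse (real (Suc k))"
      using Y[of k] t(1)[of k] by (simp add: field_simps)
    finally show ?thesis .
  qed
  then have "W \<longlonglongrightarrow> w" using w by (rule LIMSEQ_of_close)
  moreover have "E \<longlonglongrightarrow> e" using E e by (rule LIMSEQ_of_close[OF less_imp_le])
  moreover have "E k \<in> regular_normal_cone D (y + tk k *\<^sub>R W k)" for k
    using reg[of k] by (simp only: Y_eq)
  ultimately show ?thesis
    unfolding dir_normal_cone_def using t by blast
qed

lemma dir_normal_cone_scaleR_direction:
  assumes "e \<in> dir_normal_cone D y w" and "c > 0"
  shows "e \<in> dir_normal_cone D y (c *\<^sub>R w)"
proof -
  obtain wk tk ek where "wk \<longlonglongrightarrow> w" "tk \<longlonglongrightarrow> 0" "\<And>k. tk k > 0" "ek \<longlonglongrightarrow> e"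
      and "\<And>k. ek k \<in> regular_normal_cone D (y + tk k *\<^sub>R wk k)"
    using assms(1) unfolding dir_normal_cone_def by blast
  moreover have "(\<lambda>k. c *\<^sub>R wk k) \<longlonglongrightarrow> c *\<^sub>R w" and "(\<lambda>k. tk k / c) \<longlonglongrightarrow> 0"
    using \<open>wk \<longlonglongrightarrow> w\<close> tendsto_divide[OF \<open>tk \<longlonglongrightarrow> 0\<close> tendsto_const, of c] assms(2)
    by (auto intro: tendsto_scaleR)
  moreover have "y + (tk k / c) *\<^sub>R (c *\<^sub>R wk k) = y + tk k *\<^sub>R wk k" for k
    using assms(2) by simp
  ultimately show ?thesis
    unfolding dir_normal_cone_def using assms(2)
    by (intro CollectI exI[of _ "\<lambda>k. c *\<^sub>R wk k"] exI[of _ "\<lambda>k. tk k / c"] exI[of _ ek]) auto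
qed

lemma dir_normal_cone_subset_limiting_normal_cone:
  "dir_normal_cone D y w \<subseteq> limiting_normal_cone D y"
proof
  fix e assume "e \<in> dir_normal_cone D y w"
  then obtain wk tk ek where "wk \<longlonglongrightarrow> w" "tk \<longlonglongrightarrow> 0" "ek \<longlonglongrightarrow> e"
      and "\<And>k. ek k \<in> regular_normal_cone D (y + tk k *\<^sub>R wk k)"
    unfolding dir_normal_cone_def by blast
  moreover from this have "(\<lambda>k. y + tk k *\<^sub>R wk k) \<longlonglongrightarrow> y"
    using tendsto_add[OF tendsto_const tendsto_scaleR] by fastforce
  ultimately show "e \<in> limiting_normal_cone D y"
    unfolding limiting_normal_cone_def regular_normal_cone_def by blast
qed

lemma graph_deriv_normal_cone_zero_subset:
  "graph_deriv_normal_cone D y 0 w \<subseteq> dir_normal_cone D y w"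
proof
  fix z assume "z \<in> graph_deriv_normal_cone D y 0 w"
  then obtain tk wk zk where t: "tk \<longlonglongrightarrow> 0" "\<And>k. tk k > 0" and "wk \<longlonglongrightarrow> w" "zk \<longlonglongrightarrow> z"
      and lim: "\<And>k. tk k *\<^sub>R zk k \<in> limiting_normal_cone D (y + tk k *\<^sub>R wk k)"
    unfolding graph_deriv_normal_cone_def by auto
  have "zk k \<in> limiting_normal_cone D (y + tk k *\<^sub>R wk k)" for k
    using limiting_normal_cone_scaleR[OF lim[of k], of "inverse (tk k)"] t(2)[of k] by simp
  then show "z \<in> dir_normal_cone D y w"
    using dir_normal_coneI t \<open>wk \<longlonglongrightarrow> w\<close> \<open>zk \<longlonglongrightarrow> z\<close> by blast
qed

lemma sub_deriv_normal_cone_zero_subset: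
  "sub_deriv_normal_cone D y 0 w \<subseteq> dir_normal_cone D y w"
proof
  fix q assume "q \<in> sub_deriv_normal_cone D y 0 w"
  then obtain wk qk tk \<tau>k where "wk \<longlonglongrightarrow> w" "qk \<longlonglongrightarrow> q" "tk \<longlonglongrightarrow> 0"
      and pos: "\<And>k. tk k > 0 \<and> \<tau>k k > 0"
      and lim: "\<And>k. \<tau>k k *\<^sub>R qk k \<in> limiting_normal_cone D (y + tk k *\<^sub>R wk k)"
    unfolding sub_deriv_normal_cone_def by auto
  have "qk k \<in> limiting_normal_cone D (y + tk k *\<^sub>R wk k)" for k
    using limiting_normal_cone_scaleR[OF lim[of k], of "inverse (\<tau>k k)"] pos[of k] by simp
  then show "q \<in> dir_normal_cone D y w"
    using dir_normal_coneI pos \<open>tk \<longlonglongrightarrow> 0\<close> \<open>wk \<longlonglongrightarrow> w\<close> \<open>qk \<longlonglongrightarrow> q\<close> by blast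
qed

lemma sub_deriv_normal_cone_zero_normalized_subset:
  assumes "w \<noteq> 0"
  shows "sub_deriv_normal_cone D y 0 (w /\<^sub>R norm w) \<subseteq> dir_normal_cone D y w"
  using sub_deriv_normal_cone_zero_subset
    dir_normal_cone_scaleR_direction[of _ D y "w /\<^sub>R norm w" "norm w"] assms
  by fastforce

lemma hess_apply_zero [simp]: "hess_apply G2x 0 u = 0"
  by (simp add: hess_apply_def)

theorem proposition5p20:
  fixes g :: "'x::euclidean_space \<Rightarrow> 'y::euclidean_space"
    and G1 :: "'x \<Rightarrow> ('x \<Rightarrow>\<^sub>L 'y)"
    and G2 :: "'x \<Rightarrow> ('x \<Rightarrow>\<^sub>L 'x \<Rightarrow>\<^sub>L 'y)"
    and D :: "'y set" and xbar u :: 'x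
  assumes d1: "\<And>x. (g has_derivative blinfun_apply (G1 x)) (at x)"
    and d2: "\<And>x. (G1 has_derivative blinfun_apply (G2 x)) (at x)"
    and c2: "continuous_on UNIV G2"
    and closedD: "closed D"
    and gph: "g xbar \<in> D"
    and unit: "norm u = 1"
    and FOSCMS: "\<And>ys. adjoint (blinfun_apply (G1 xbar)) ys = 0 \<Longrightarrow>
        ys \<in> dir_normal_cone D (g xbar) (G1 xbar u) \<Longrightarrow> ys = 0"
  shows
    "(\<forall>ys zs. adjoint (blinfun_apply (G1 xbar)) ys = 0 \<and>
        hess_apply (G2 xbar) ys u + adjoint (blinfun_apply (G1 xbar)) zs = 0 \<and>
        ys \<in> dir_normal_cone D (g xbar) (G1 xbar u) \<and>
        zs \<in> graph_deriv_normal_cone D (g xbar) ys (G1 xbar u) \<longrightarrow> ys = 0)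
     \<and>
     ((\<forall>ys zh. adjoint (blinfun_apply (G1 xbar)) ys = 0 \<and>
         adjoint (blinfun_apply (G1 xbar)) zh = 0 \<and>
         ys \<in> dir_normal_cone D (g xbar) (G1 xbar u) \<and>
         zh \<in> graph_deriv_normal_cone D (g xbar) ys 0 \<longrightarrow> zh = 0)
      \<or>
      (G1 xbar u \<noteq> 0 \<and>
       (\<forall>ys zh. adjoint (blinfun_apply (G1 xbar)) ys = 0 \<and>
         adjoint (blinfun_apply (G1 xbar)) zh = 0 \<and>
         ys \<in> dir_normal_cone D (g xbar) (G1 xbar u) \<longrightarrow>
         zh \<notin> sub_deriv_normal_cone D (g xbar) ys (G1 xbar u /\<^sub>R norm (G1 xbar u)))))
     \<and>
     (\<forall>xs ys zs. xs = hess_apply (G2 xbar) ys u + adjoint (blinfun_apply (G1 xbar)) zs \<and>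
        ys \<in> dir_normal_cone D (g xbar) (G1 xbar u) \<and>
        adjoint (blinfun_apply (G1 xbar)) ys = 0 \<and>
        zs \<in> graph_deriv_normal_cone D (g xbar) ys (G1 xbar u) \<longrightarrow>
        (\<exists>lam\<in>limiting_normal_cone D (g xbar). xs = adjoint (blinfun_apply (G1 xbar)) lam))"
proof -
  let ?A = "adjoint (blinfun_apply (G1 xbar))" and ?w = "G1 xbar u" and ?y = "g xbar"
  have graph_deriv: "z \<in> dir_normal_cone D ?y ?w" if "z \<in> graph_deriv_normal_cone D ?y 0 ?w" for z
    using that graph_deriv_normal_cone_zero_subset by blast
  have sub_deriv: "z \<in> dir_normal_cone D ?y ?w \<and> norm z = 1"
    if "?w \<noteq> 0" "z \<in> sub_deriv_normal_cone D ?y 0 (?w /\<^sub>R norm ?w)" for z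
    using that sub_deriv_normal_cone_zero_normalized_subset unfolding sub_deriv_normal_cone_def
    by blast
  show ?thesis
    apply (intro conjI allI impI)
    subgoal using FOSCMS by blast
    subgoal
    proof (cases "?w = 0")
      case True
      then show ?thesis using FOSCMS graph_deriv by (intro disjI1) auto
    next
      case False
      then show ?thesis using FOSCMS sub_deriv by (intro disjI2) fastforce
    qed
    subgoal premises prems for xs ys zs
    proof -
      have "ys = 0" using FOSCMS prems by blast
      then have "zs \<in> limiting_normal_cone D ?y"
        using graph_deriv prems dir_normal_cone_subset_limiting_normal_cone by blast
      moreover have "xs = ?A zs" using prems \<open>ys = 0\<close> by simp
      ultimately show ?thesis by blast
    qed
    done
qed

end
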